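(* For every $g:E^2\times E^2\to\mathbb R$, $$\log\varphi_1(g)\ge2\log\varphi_0(g).$$
   Context: Let $E$ be a finite set and $P,Q$ irreducible aperiodic stochastic $E\times E$ matrices. For $g:E^2\times E^2\to\mathbb R$, $\varphi_0(g)$ is the spectral radius of the $E^2\times E^2$ matrix $\Phi_0(g)_{(x,y),(x',y')}=\exp(g(x,y,x',y'))P_{x,x'}Q_{y,y'}$ and $\varphi_1(g)$ the spectral radius of the $E^3\times E^3$ matrix $\Phi_1(g)_{(x,y,z),(x',y',z')}=\exp(g(x,y,x',y')+g(x,z,x',z'))P_{x,x'}Q_{y,y'}Q_{z,z'}$. *)

theory Defs
  imports Complex_Main
begin

definition mat_mult :: "('n::finite \<Rightarrow> 'n \<Rightarrow> real) \<Rightarrow> ('n \<Rightarrow> 'n \<Rightarrow> real) \<Rightarrow> ('n \<Rightarrow> 'n \<Rightarrow> real)" where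
  "mat_mult A B = (\<lambda>i k. \<Sum>j\<in>UNIV. A i j * B j k)"

fun mat_pow :: "('n::finite \<Rightarrow> 'n \<Rightarrow> real) \<Rightarrow> nat \<Rightarrow> ('n \<Rightarrow> 'n \<Rightarrow> real)" where
  "mat_pow A 0 = (\<lambda>i j. if i = j then 1 else 0)"
| "mat_pow A (Suc n) = mat_mult (mat_pow A n) A"

definition stochastic :: "('n::finite \<Rightarrow> 'n \<Rightarrow> real) \<Rightarrow> bool" where
  "stochastic P \<longleftrightarrow> (\<forall>i j. P i j \<ge> 0) \<and> (\<forall>i. (\<Sum>j\<in>UNIV. P i j) = 1)"

definition irreducible_mat :: "('n::finite \<Rightarrow> 'n \<Rightarrow> real) \<Rightarrow> bool" where
  "irreducible_mat P \<longleftrightarrow> (\<forall>i j. \<exists>n>0. mat_pow P n i j > 0)"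

definition period :: "('n::finite \<Rightarrow> 'n \<Rightarrow> real) \<Rightarrow> 'n \<Rightarrow> nat" where
  "period P i = Gcd {n. n > 0 \<and> mat_pow P n i i > 0}"

definition aperiodic :: "('n::finite \<Rightarrow> 'n \<Rightarrow> real) \<Rightarrow> bool" where
  "aperiodic P \<longleftrightarrow> (\<forall>i. period P i = 1)"

definition eigenvalue :: "('n::finite \<Rightarrow> 'n \<Rightarrow> real) \<Rightarrow> complex \<Rightarrow> bool" where
  "eigenvalue M l \<longleftrightarrow> (\<exists>v::'n \<Rightarrow> complex. v \<noteq> (\<lambda>_. 0) \<and>
      (\<forall>i. (\<Sum>j\<in>UNIV. complex_of_real (M i j) * v j) = l * v i))"

definition spectral_radius :: "('n::finite \<Rightarrow> 'n \<Rightarrow> real) \<Rightarrow> real" where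
  "spectral_radius M = Max (cmod ` {l. eigenvalue M l})"

definition Phi0 :: "('e::finite \<Rightarrow> 'e \<Rightarrow> real) \<Rightarrow> ('e \<Rightarrow> 'e \<Rightarrow> real) \<Rightarrow>
    ('e \<Rightarrow> 'e \<Rightarrow> 'e \<Rightarrow> 'e \<Rightarrow> real) \<Rightarrow> ('e \<times> 'e) \<Rightarrow> ('e \<times> 'e) \<Rightarrow> real" where
  "Phi0 P Q g = (\<lambda>(x, y) (x', y'). exp (g x y x' y') * P x x' * Q y y')"

definition Phi1 :: "('e::finite \<Rightarrow> 'e \<Rightarrow> real) \<Rightarrow> ('e \<Rightarrow> 'e \<Rightarrow> real) \<Rightarrow>
    ('e \<Rightarrow> 'e \<Rightarrow> 'e \<Rightarrow> 'e \<Rightarrow> real) \<Rightarrow> ('e \<times> 'e \<times> 'e) \<Rightarrow> ('e \<times> 'e \<times> 'e) \<Rightarrow> real" where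
  "Phi1 P Q g = (\<lambda>(x, y, z) (x', y', z').
      exp (g x y x' y' + g x z x' z') * P x x' * Q y y' * Q z z')"

definition varphi0 where "varphi0 P Q g = spectral_radius (Phi0 P Q g)"
definition varphi1 where "varphi1 P Q g = spectral_radius (Phi1 P Q g)"

end

theory Submission
  imports
    Defs
    "HOL-Library.Cardinality"
    "HOL-Analysis.Convex"
    "Jordan_Normal_Form.Spectral_Radius"
begin

text \<open>
  Let \<open>R\<^sub>0(k; x, y)\<close> and \<open>R\<^sub>1(k; x, y, z)\<close> be the row sums of \<open>\<Phi>\<^sub>0\<^sup>k\<close> and \<open>\<Phi>\<^sub>1\<^sup>k\<close>.
  Conditionally on the path of the \<open>P\<close>-chain started at \<open>x\<close>, the two \<open>Q\<close>-chains of \<open>\<Phi>\<^sub>1\<close> are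
  independent, so \<open>R\<^sub>1(k; x, y, y)\<close> is the \<open>P\<close>-expectation of the square of the quantity whose
  expectation is \<open>R\<^sub>0(k; x, y)\<close>, and Jensen's inequality gives \<open>R\<^sub>0(k; x, y)\<^sup>2 \<le> R\<^sub>1(k; x, y, y)\<close>.
  Without path spaces this becomes an induction over the first step of the \<open>P\<close>-chain, which
  needs arbitrary weights on the starting \<open>Q\<close>-state in place of a fixed \<open>y\<close>.

  The spectral radius of a nonnegative matrix \<open>B\<close> is read off from row sums: the absolute values
  of an eigenvector for an eigenvalue of maximal modulus make some row sum of \<open>B\<^sup>k\<close> at least
  \<open>C \<rho>(B)\<^sup>k\<close>, while the Jordan normal form bounds all entries of \<open>B\<^sup>k\<close> by \<open>C (\<rho>(B) + \<epsilon>)\<^sup>k\<close>.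
  Hence \<open>\<phi>\<^sub>0\<^sup>2 \<le> \<phi>\<^sub>1\<close>; and \<open>\<phi>\<^sub>0 \<ge> exp (min g) > 0\<close>, so the logarithms compare.
\<close>

section \<open>Powers of matrices indexed by a finite type\<close>

lemma mat_mult_assoc:
  "mat_mult (mat_mult A B) C = mat_mult A (mat_mult B (C :: 'n::finite \<Rightarrow> 'n \<Rightarrow> real))"
  unfolding mat_mult_def
  by (intro ext) (simp add: sum_distrib_left sum_distrib_right mult.assoc, rule sum.swap)

lemma mat_pow_Suc_left: "mat_pow B (Suc k) = mat_mult B (mat_pow (B :: 'n::finite \<Rightarrow> 'n \<Rightarrow> real) k)"
proof (induction k)
  case 0
  show ?case by (simp add: mat_mult_def if_distrib[of "\<lambda>x. x * _"] if_distrib[of "\<lambda>x. _ * x"] cong: if_cong)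
next
  case (Suc k)
  then show ?case by (simp add: mat_mult_assoc)
qed

lemma mat_pow_nonneg:
  "(\<And>i j. 0 \<le> B i j) \<Longrightarrow> 0 \<le> mat_pow (B :: 'n::finite \<Rightarrow> 'n \<Rightarrow> real) k i j"
  by (induction k arbitrary: i j) (auto simp: mat_mult_def intro!: sum_nonneg)

lemma mat_pow_scale:
  "mat_pow (\<lambda>i j. c * B i j) k = (\<lambda>i j. c ^ k * mat_pow (B :: 'n::finite \<Rightarrow> 'n \<Rightarrow> real) k i j)"
  by (induction k) (auto simp: mat_mult_def sum_distrib_left mult_ac)

definition pow_row_sum :: "('n::finite \<Rightarrow> 'n \<Rightarrow> real) \<Rightarrow> nat \<Rightarrow> 'n \<Rightarrow> real" where
  "pow_row_sum B k i = (\<Sum>j\<in>UNIV. mat_pow B k i j)"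

lemma pow_row_sum_0 [simp]: "pow_row_sum B 0 i = 1"
  by (simp add: pow_row_sum_def)

lemma pow_row_sum_Suc: "pow_row_sum B (Suc k) i = (\<Sum>j\<in>UNIV. B i j * pow_row_sum B k j)"
  unfolding pow_row_sum_def mat_pow_Suc_left mat_mult_def sum_distrib_left by (rule sum.swap)

section \<open>The spectral radius through Jordan normal forms\<close>

definition enum_idx :: "nat \<Rightarrow> 'n::finite" where
  "enum_idx = (SOME f. bij_betw f {..<CARD('n)} UNIV)"

lemma bij_betw_enum_idx: "bij_betw (enum_idx :: nat \<Rightarrow> 'n::finite) {..<CARD('n)} UNIV"
proof -
  have "\<exists>f :: nat \<Rightarrow> 'n. bij_betw f {..<CARD('n)} UNIV"
    using ex_bij_betw_nat_finite[of "UNIV :: 'n set"] by (simp add: lessThan_atLeast0)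
  then show ?thesis
    unfolding enum_idx_def by (rule someI_ex)
qed

lemma enum_idx_surj: "\<exists>i<CARD('n). enum_idx i = (a :: 'n::finite)"
  using bij_betw_enum_idx[where 'n='n] unfolding bij_betw_def by (metis imageE lessThan_iff UNIV_I)

lemma enum_idx_eq_iff:
  "i < CARD('n) \<Longrightarrow> j < CARD('n) \<Longrightarrow> (enum_idx i = (enum_idx j :: 'n::finite)) = (i = j)"
  using bij_betw_enum_idx[where 'n='n] unfolding bij_betw_def inj_on_def by auto

lemma sum_enum_idx: "(\<Sum>a\<in>UNIV. f a) = (\<Sum>i<CARD('n). f (enum_idx i :: 'n::finite))"
  using sum.reindex_bij_betw[OF bij_betw_enum_idx, of f] by simp

definition as_mat :: "('n::finite \<Rightarrow> 'n \<Rightarrow> real) \<Rightarrow> complex mat" where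
  "as_mat B = mat CARD('n) CARD('n) (\<lambda>(i, j). complex_of_real (B (enum_idx i) (enum_idx j)))"

definition as_vec :: "('n::finite \<Rightarrow> complex) \<Rightarrow> complex vec" where
  "as_vec v = vec CARD('n) (\<lambda>i. v (enum_idx i))"

lemma as_mat_carrier: "as_mat (B :: 'n::finite \<Rightarrow> 'n \<Rightarrow> real) \<in> carrier_mat CARD('n) CARD('n)"
  by (simp add: as_mat_def)

lemma as_mat_mult: "as_mat (mat_mult A B) = as_mat A * as_mat (B :: 'n::finite \<Rightarrow> 'n \<Rightarrow> real)"
  by (rule eq_matI)
    (auto simp: as_mat_def mat_mult_def scalar_prod_def sum_enum_idx[where 'n='n] lessThan_atLeast0)

lemma as_mat_pow: "as_mat (mat_pow B k) = as_mat (B :: 'n::finite \<Rightarrow> 'n \<Rightarrow> real) ^\<^sub>m k"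
proof (induction k)
  case 0
  show ?case
    by (rule eq_matI) (auto simp: as_mat_def enum_idx_eq_iff)
next
  case (Suc k)
  then show ?case by (simp add: as_mat_mult)
qed

lemma as_vec_carrier: "as_vec (v :: 'n::finite \<Rightarrow> complex) \<in> carrier_vec CARD('n)"
  by (simp add: as_vec_def)

lemma as_vec_inject: "as_vec u = as_vec v \<longleftrightarrow> u = (v :: 'n::finite \<Rightarrow> complex)"
proof
  assume eq: "as_vec u = as_vec v"
  show "u = v"
  proof
    fix a :: 'n
    obtain i where "i < CARD('n)" "enum_idx i = a" using enum_idx_surj by blast
    then show "u a = v a" using arg_cong[OF eq, of "\<lambda>w. w $ i"] by (simp add: as_vec_def)
  qed
qed simp

lemma carrier_vec_as_vec:
  assumes "w \<in> carrier_vec CARD('n::finite)"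
  shows "\<exists>v :: 'n \<Rightarrow> complex. w = as_vec v"
proof -
  define v :: "'n \<Rightarrow> complex" where "v a = w $ inv_into {..<CARD('n)} enum_idx a" for a
  have "w = as_vec v"
    using assms bij_betw_enum_idx[where 'n='n]
    by (intro eq_vecI) (auto simp: as_vec_def v_def bij_betw_def inv_into_f_f)
  then show ?thesis by blast
qed

lemma as_mat_mult_as_vec:
  "as_mat B *\<^sub>v as_vec v = as_vec (\<lambda>i. \<Sum>j\<in>UNIV. complex_of_real (B i j) * v (j :: 'n::finite))"
  by (rule eq_vecI)
    (auto simp: as_mat_def as_vec_def scalar_prod_def sum_enum_idx[where 'n='n] lessThan_atLeast0)

lemma eigenvalue_iff_as_mat:
  "Defs.eigenvalue B l \<longleftrightarrow> Char_Poly.eigenvalue (as_mat (B :: 'n::finite \<Rightarrow> 'n \<Rightarrow> real)) l"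
proof -
  have as_vec_0: "as_vec (\<lambda>_ :: 'n. 0) = 0\<^sub>v CARD('n)"
    by (simp add: as_vec_def zero_vec_def)
  have as_vec_smult: "as_vec (\<lambda>i. l * v i) = l \<cdot>\<^sub>v as_vec v" for v :: "'n \<Rightarrow> complex"
    by (rule eq_vecI) (simp_all add: as_vec_def)
  have eigen_eq: "as_mat B *\<^sub>v as_vec v = l \<cdot>\<^sub>v as_vec v \<longleftrightarrow>
      (\<forall>i. (\<Sum>j\<in>UNIV. complex_of_real (B i j) * v j) = l * v i)" for v :: "'n \<Rightarrow> complex"
    by (simp add: as_mat_mult_as_vec as_vec_smult[symmetric] as_vec_inject fun_eq_iff)
  have nonzero: "as_vec v \<noteq> 0\<^sub>v CARD('n) \<longleftrightarrow> v \<noteq> (\<lambda>_. 0)" for v :: "'n \<Rightarrow> complex"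
    by (simp add: as_vec_0[symmetric] as_vec_inject)
  have "Defs.eigenvalue B l \<longleftrightarrow>
      (\<exists>v :: 'n \<Rightarrow> complex. as_vec v \<noteq> 0\<^sub>v CARD('n) \<and> as_mat B *\<^sub>v as_vec v = l \<cdot>\<^sub>v as_vec v)"
    unfolding Defs.eigenvalue_def eigen_eq nonzero ..
  also have "\<dots> \<longleftrightarrow> (\<exists>w \<in> carrier_vec CARD('n). w \<noteq> 0\<^sub>v CARD('n) \<and> as_mat B *\<^sub>v w = l \<cdot>\<^sub>v w)"
    using carrier_vec_as_vec[where 'n='n] as_vec_carrier by blast
  also have "\<dots> \<longleftrightarrow> Char_Poly.eigenvalue (as_mat B) l"
    unfolding Char_Poly.eigenvalue_def eigenvector_def using carrier_matD(1)[OF as_mat_carrier, of B] by auto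
  finally show ?thesis .
qed

lemma spectral_radius_as_mat:
  "Defs.spectral_radius B = Spectral_Radius.spectral_radius (as_mat (B :: 'n::finite \<Rightarrow> 'n \<Rightarrow> real))"
  unfolding Defs.spectral_radius_def Spectral_Radius.spectral_radius_def Spectral_Radius.spectrum_def
    eigenvalue_iff_as_mat ..

lemma spectral_radius_attained:
  "\<exists>l. Defs.eigenvalue B l \<and> cmod l = Defs.spectral_radius (B :: 'n::finite \<Rightarrow> 'n \<Rightarrow> real)"
  using spectral_radius_mem_max(1)[OF as_mat_carrier[of B]]
  by (auto simp: spectral_radius_as_mat Spectral_Radius.spectrum_def eigenvalue_iff_as_mat)

lemma eigenvalue_norm_le_spectral_radius:
  "Defs.eigenvalue (B :: 'n::finite \<Rightarrow> 'n \<Rightarrow> real) l \<Longrightarrow> cmod l \<le> Defs.spectral_radius B"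
  using spectral_radius_mem_max(2)[OF as_mat_carrier[of B]]
  by (auto simp: spectral_radius_as_mat Spectral_Radius.spectrum_def eigenvalue_iff_as_mat)

lemma spectral_radius_nonneg: "0 \<le> Defs.spectral_radius (B :: 'n::finite \<Rightarrow> 'n \<Rightarrow> real)"
  using spectral_radius_attained[of B] by (metis norm_ge_zero)

lemma eigenvalue_scale:
  "Defs.eigenvalue B l \<Longrightarrow> Defs.eigenvalue (\<lambda>i j. c * B i j) (complex_of_real c * l)"
  unfolding Defs.eigenvalue_def by (auto simp: mult.assoc simp flip: sum_distrib_left)

lemma mat_pow_bound_of_spectral_radius_less:
  fixes B :: "'n::finite \<Rightarrow> 'n \<Rightarrow> real"
  assumes "Defs.spectral_radius B < s"
  obtains C where "\<And>k i j. \<bar>mat_pow B k i j\<bar> \<le> C * s ^ k"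
proof -
  have s: "s > 0" using assms spectral_radius_nonneg[of B] by linarith
  define B' where "B' = (\<lambda>i j. B i j / s)"
  have "Spectral_Radius.spectral_radius (as_mat B') < 1"
  proof -
    obtain \<mu> where \<mu>: "Defs.eigenvalue B' \<mu>" "cmod \<mu> = Defs.spectral_radius B'"
      using spectral_radius_attained by blast
    have "(\<lambda>i j. s * B' i j) = B" using s by (simp add: B'_def)
    then have "s * cmod \<mu> \<le> Defs.spectral_radius B"
      using eigenvalue_norm_le_spectral_radius[OF eigenvalue_scale[OF \<mu>(1), of s]] s
      by (simp add: norm_mult)
    then have "s * Defs.spectral_radius B' < s * 1" using assms \<mu>(2) by simp
    then show ?thesis using s by (simp add: spectral_radius_as_mat)
  qed
  then obtain C where C: "\<And>k. norm_bound (as_mat B' ^\<^sub>m k) C"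
    using spectral_radius_jnf_norm_bound_less_1_upper_triangular[OF as_mat_carrier] by blast
  have "\<bar>mat_pow B k i j\<bar> \<le> C * s ^ k" for k i j
  proof -
    obtain a b where ab: "a < CARD('n)" "enum_idx a = i" "b < CARD('n)" "enum_idx b = j"
      using enum_idx_surj by metis
    then have "cmod ((as_mat B' ^\<^sub>m k) $$ (a, b)) \<le> C"
      using C[of k] unfolding norm_bound_def by (simp add: carrier_matD[OF as_mat_carrier])
    then have "\<bar>mat_pow B' k i j\<bar> \<le> C"
      unfolding as_mat_pow[symmetric] using ab by (simp add: as_mat_def)
    moreover have "mat_pow B' k = (\<lambda>i j. (1 / s) ^ k * mat_pow B k i j)"
      using mat_pow_scale[of "1 / s" B k] by (simp add: B'_def)
    ultimately show ?thesis using s by (simp add: abs_mult power_divide field_simps)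
  qed
  then show ?thesis by (rule that)
qed

section \<open>Spectral radius and growth of row sums\<close>

lemma spectral_radius_ge_of_row_sum_growth:
  fixes B :: "'n::finite \<Rightarrow> 'n \<Rightarrow> real"
  assumes c: "c > 0" and growth: "\<And>k. c * r ^ k \<le> pow_row_sum B k i"
  shows "r \<le> Defs.spectral_radius B"
proof (rule ccontr)
  assume "\<not> r \<le> Defs.spectral_radius B"
  then have "Defs.spectral_radius B < (Defs.spectral_radius B + r) / 2" "(Defs.spectral_radius B + r) / 2 < r"
    by simp_all
  then obtain s where s: "Defs.spectral_radius B < s" "s < r" by blast
  then have "s > 0" using spectral_radius_nonneg[of B] by linarith
  obtain C where C: "\<And>k i j. \<bar>mat_pow B k i j\<bar> \<le> C * s ^ k"
    using mat_pow_bound_of_spectral_radius_less[OF s(1)] by blast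
  have "(r / s) ^ k \<le> CARD('n) * C / c" for k
  proof -
    have "pow_row_sum B k i \<le> (\<Sum>j :: 'n \<in> UNIV. C * s ^ k)"
      unfolding pow_row_sum_def by (rule sum_mono) (rule abs_le_D1[OF C])
    then have "c * r ^ k \<le> CARD('n) * C * s ^ k" using growth[of k] by simp
    then have "c * (r / s) ^ k \<le> CARD('n) * C"
      using \<open>s > 0\<close> by (simp add: power_divide divide_le_eq)
    then show ?thesis using c by (simp add: pos_le_divide_eq mult.commute)
  qed
  moreover obtain k where "CARD('n) * C / c < (r / s) ^ k"
    using real_arch_pow[of "r / s"] s \<open>s > 0\<close> by auto
  ultimately show False by (meson not_le)
qed

lemma spectral_radius_subinvariant_vector:
  fixes B :: "'n::finite \<Rightarrow> 'n \<Rightarrow> real"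
  assumes nonneg: "\<And>i j. 0 \<le> B i j"
  obtains u where "\<And>j. 0 \<le> u j" "\<exists>i. 0 < u i"
    "\<And>i. Defs.spectral_radius B * u i \<le> (\<Sum>j\<in>UNIV. B i j * u j)"
proof -
  obtain l v where v: "v \<noteq> (\<lambda>_. 0)" "\<And>i. (\<Sum>j\<in>UNIV. complex_of_real (B i j) * v j) = l * v i"
    and l: "cmod l = Defs.spectral_radius B"
    using spectral_radius_attained[of B] unfolding Defs.eigenvalue_def by blast
  have "Defs.spectral_radius B * cmod (v i) \<le> (\<Sum>j\<in>UNIV. B i j * cmod (v j))" for i
  proof -
    have "Defs.spectral_radius B * cmod (v i) = cmod (\<Sum>j\<in>UNIV. complex_of_real (B i j) * v j)"
      by (simp add: l v(2) norm_mult)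
    also have "\<dots> \<le> (\<Sum>j\<in>UNIV. B i j * cmod (v j))"
      using norm_sum[of "\<lambda>j. complex_of_real (B i j) * v j"] nonneg by (simp add: norm_mult)
    finally show ?thesis .
  qed
  moreover have "\<exists>i. 0 < cmod (v i)" using v(1) by auto
  ultimately show ?thesis by (intro that[of "\<lambda>j. cmod (v j)"]) auto
qed

lemma mat_pow_subinvariant:
  fixes B :: "'n::finite \<Rightarrow> 'n \<Rightarrow> real"
  assumes nonneg: "\<And>i j. 0 \<le> B i j" and r: "0 \<le> r"
    and sub: "\<And>i. r * u i \<le> (\<Sum>j\<in>UNIV. B i j * u j)"
  shows "r ^ k * u i \<le> (\<Sum>j\<in>UNIV. mat_pow B k i j * u j)"
proof (induction k)
  case 0
  show ?case by (simp add: if_distrib[of "\<lambda>x. x * _"] cong: if_cong)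
next
  case (Suc k)
  have "r ^ Suc k * u i \<le> r * (\<Sum>j\<in>UNIV. mat_pow B k i j * u j)"
    using mult_left_mono[OF Suc r] by (simp add: mult.assoc)
  also have "\<dots> = (\<Sum>l\<in>UNIV. mat_pow B k i l * (r * u l))"
    by (simp add: sum_distrib_left mult_ac)
  also have "\<dots> \<le> (\<Sum>l\<in>UNIV. mat_pow B k i l * (\<Sum>j\<in>UNIV. B l j * u j))"
    by (intro sum_mono mult_left_mono sub mat_pow_nonneg nonneg)
  also have "\<dots> = (\<Sum>j\<in>UNIV. mat_pow B (Suc k) i j * u j)"
    unfolding mat_pow.simps mat_mult_def sum_distrib_left sum_distrib_right mult.assoc
    by (rule sum.swap)
  finally show ?case .
qed

lemma row_sum_growth_of_nonneg:
  fixes B :: "'n::finite \<Rightarrow> 'n \<Rightarrow> real"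
  assumes nonneg: "\<And>i j. 0 \<le> B i j"
  obtains i C where "C > 0" "\<And>k. C * Defs.spectral_radius B ^ k \<le> pow_row_sum B k i"
proof -
  obtain u where u: "\<And>j. 0 \<le> u j" "\<exists>i. 0 < u i"
    and sub: "\<And>i. Defs.spectral_radius B * u i \<le> (\<Sum>j\<in>UNIV. B i j * u j)"
    using spectral_radius_subinvariant_vector[of B, OF nonneg] by blast
  then obtain i where ui: "0 < u i" by blast
  define M where "M = Max (range u)"
  have uM: "u j \<le> M" for j unfolding M_def by (rule Max_ge) auto
  have M: "M > 0" using uM[of i] ui by linarith
  have "u i / M * Defs.spectral_radius B ^ k \<le> pow_row_sum B k i" for k
  proof -
    have "Defs.spectral_radius B ^ k * u i \<le> (\<Sum>j\<in>UNIV. mat_pow B k i j * u j)"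
      by (rule mat_pow_subinvariant[of B, OF nonneg spectral_radius_nonneg sub])
    also have "\<dots> \<le> (\<Sum>j\<in>UNIV. mat_pow B k i j * M)"
      using mat_pow_nonneg[OF nonneg] uM by (intro sum_mono mult_left_mono) auto
    finally have "Defs.spectral_radius B ^ k * u i \<le> pow_row_sum B k i * M"
      by (simp add: pow_row_sum_def sum_distrib_right)
    then show ?thesis using M by (simp add: field_simps)
  qed
  then show ?thesis using ui M by (intro that[of "u i / M" i]) auto
qed

lemma row_sum_lower_bound_le_spectral_radius:
  fixes B :: "'n::finite \<Rightarrow> 'n \<Rightarrow> real"
  assumes nonneg: "\<And>i j. 0 \<le> B i j" and rows: "\<And>i. m \<le> (\<Sum>j\<in>UNIV. B i j)"
  shows "m \<le> Defs.spectral_radius B"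
proof (cases "m \<le> 0")
  case True
  then show ?thesis using spectral_radius_nonneg[of B] by linarith
next
  case False
  have "m ^ k \<le> pow_row_sum B k i" for k i
  proof (induction k arbitrary: i)
    case (Suc k)
    have "m ^ Suc k = m ^ k * m" by simp
    also have "\<dots> \<le> m ^ k * (\<Sum>j\<in>UNIV. B i j)"
      using False by (intro mult_left_mono rows) simp
    also have "\<dots> = (\<Sum>j\<in>UNIV. B i j * m ^ k)"
      by (simp add: sum_distrib_left mult.commute)
    also have "\<dots> \<le> (\<Sum>j\<in>UNIV. B i j * pow_row_sum B k j)"
      by (intro sum_mono mult_left_mono Suc.IH nonneg)
    finally show ?case by (simp add: pow_row_sum_Suc)
  qed simp
  then show ?thesis by (intro spectral_radius_ge_of_row_sum_growth[of 1]) auto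
qed

lemma spectral_radius_power_le_of_row_sums:
  fixes B :: "'m::finite \<Rightarrow> 'm \<Rightarrow> real" and C :: "'n::finite \<Rightarrow> 'n \<Rightarrow> real"
  assumes nonneg: "\<And>i j. 0 \<le> B i j"
    and rows: "\<And>k i. pow_row_sum B k i ^ p \<le> pow_row_sum C k (f i)"
  shows "Defs.spectral_radius B ^ p \<le> Defs.spectral_radius C"
proof -
  obtain i c where c: "c > 0" and growth: "\<And>k. c * Defs.spectral_radius B ^ k \<le> pow_row_sum B k i"
    using row_sum_growth_of_nonneg[of B, OF nonneg] by blast
  have "c ^ p * (Defs.spectral_radius B ^ p) ^ k \<le> pow_row_sum C k (f i)" for k
  proof -
    have "(Defs.spectral_radius B ^ p) ^ k = (Defs.spectral_radius B ^ k) ^ p"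
      by (simp only: power_mult[symmetric] mult.commute)
    then have "c ^ p * (Defs.spectral_radius B ^ p) ^ k = (c * Defs.spectral_radius B ^ k) ^ p"
      by (simp only: power_mult_distrib)
    also have "\<dots> \<le> pow_row_sum B k i ^ p"
      using c spectral_radius_nonneg[of B] by (intro power_mono growth) simp
    also have "\<dots> \<le> pow_row_sum C k (f i)" by (rule rows)
    finally show ?thesis .
  qed
  then show ?thesis using c by (intro spectral_radius_ge_of_row_sum_growth[of "c ^ p"]) auto
qed

section \<open>Row sums of \<open>\<Phi>\<^sub>0\<close> and \<open>\<Phi>\<^sub>1\<close>\<close>

lemma sum_UNIV_prod:
  "(\<Sum>p\<in>UNIV. f p) = (\<Sum>a\<in>UNIV. \<Sum>b\<in>UNIV. f (a :: 'a::finite, b :: 'b::finite))"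
  by (simp add: sum.cartesian_product)

lemma Phi0_apply: "Phi0 P Q g (x, y) (x', y') = exp (g x y x' y') * P x x' * Q y y'"
  by (simp add: Phi0_def)

lemma Phi1_apply:
  "Phi1 P Q g (x, y, z) (x', y', z') = exp (g x y x' y' + g x z x' z') * P x x' * Q y y' * Q z z'"
  by (simp add: Phi1_def)

lemma Phi0_nonneg:
  assumes "stochastic P" "stochastic Q"
  shows "0 \<le> Phi0 P Q g i j"
  using assms unfolding stochastic_def Phi0_def by (auto split: prod.splits)

lemma varphi0_pos:
  fixes P Q :: "'e::finite \<Rightarrow> 'e \<Rightarrow> real"
  assumes P: "stochastic P" and Q: "stochastic Q"
  shows "0 < varphi0 P Q g"
proof -
  define m where "m = Min (range (\<lambda>(x, y, x', y'). g x y x' y'))"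
  have m: "m \<le> g x y x' y'" for x y x' y'
    unfolding m_def by (rule Min_le) (auto intro: image_eqI[of _ _ "(x, y, x', y')"])
  have "exp m \<le> (\<Sum>j\<in>UNIV. Phi0 P Q g (x, y) j)" for x y
  proof -
    have "exp m = (\<Sum>x'\<in>UNIV. \<Sum>y'\<in>UNIV. exp m * P x x' * Q y y')"
      using P Q unfolding stochastic_def by (simp flip: sum_distrib_left sum_distrib_right)
    also have "\<dots> \<le> (\<Sum>x'\<in>UNIV. \<Sum>y'\<in>UNIV. exp (g x y x' y') * P x x' * Q y y')"
      using P Q m unfolding stochastic_def by (intro sum_mono mult_right_mono) auto
    finally show ?thesis by (simp add: sum_UNIV_prod Phi0_apply)
  qed
  then have "exp m \<le> varphi0 P Q g"
    unfolding varphi0_def using Phi0_nonneg[OF P Q]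
    by (intro row_sum_lower_bound_le_spectral_radius) auto
  then show ?thesis using exp_gt_zero[of m] by linarith
qed

definition step_weights ::
    "('e::finite \<Rightarrow> 'e \<Rightarrow> real) \<Rightarrow> ('e \<Rightarrow> 'e \<Rightarrow> 'e \<Rightarrow> 'e \<Rightarrow> real) \<Rightarrow> 'e \<Rightarrow> 'e \<Rightarrow> ('e \<Rightarrow> real) \<Rightarrow> 'e \<Rightarrow> real" where
  "step_weights Q g x x' c y' = (\<Sum>y\<in>UNIV. c y * (exp (g x y x' y') * Q y y'))"

lemma Phi0_weighted_row_sum_Suc:
  "(\<Sum>y\<in>UNIV. c y * pow_row_sum (Phi0 P Q g) (Suc k) (x, y)) =
    (\<Sum>x'\<in>UNIV. P x x' *
      (\<Sum>y'\<in>UNIV. step_weights Q g x x' c y' * pow_row_sum (Phi0 P Q g) k (x', y')))"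
proof -
  have "(\<Sum>y\<in>UNIV. c y * pow_row_sum (Phi0 P Q g) (Suc k) (x, y)) =
      (\<Sum>p\<in>UNIV. \<Sum>y\<in>UNIV. c y * (Phi0 P Q g (x, y) p * pow_row_sum (Phi0 P Q g) k p))"
    unfolding pow_row_sum_Suc sum_distrib_left by (rule sum.swap)
  also have "\<dots> = (\<Sum>x'\<in>UNIV. P x x' *
      (\<Sum>y'\<in>UNIV. step_weights Q g x x' c y' * pow_row_sum (Phi0 P Q g) k (x', y')))"
    by (simp add: sum_UNIV_prod Phi0_apply step_weights_def sum_distrib_left sum_distrib_right mult_ac)
  finally show ?thesis .
qed

lemma Phi1_weighted_row_sum_Suc:
  "(\<Sum>y\<in>UNIV. \<Sum>z\<in>UNIV. c y * c z * pow_row_sum (Phi1 P Q g) (Suc k) (x, y, z)) =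
    (\<Sum>x'\<in>UNIV. P x x' * (\<Sum>y'\<in>UNIV. \<Sum>z'\<in>UNIV.
      step_weights Q g x x' c y' * step_weights Q g x x' c z' * pow_row_sum (Phi1 P Q g) k (x', y', z')))"
proof -
  let ?F = "\<lambda>y z p. c y * c z * (Phi1 P Q g (x, y, z) p * pow_row_sum (Phi1 P Q g) k p)"
  have "(\<Sum>y\<in>UNIV. \<Sum>z\<in>UNIV. c y * c z * pow_row_sum (Phi1 P Q g) (Suc k) (x, y, z)) =
      (\<Sum>y\<in>UNIV. \<Sum>p\<in>UNIV. \<Sum>z\<in>UNIV. ?F y z p)"
    unfolding pow_row_sum_Suc sum_distrib_left by (intro sum.cong refl sum.swap)
  also have "\<dots> = (\<Sum>p\<in>UNIV. \<Sum>y\<in>UNIV. \<Sum>z\<in>UNIV. ?F y z p)"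
    by (rule sum.swap)
  also have "\<dots> = (\<Sum>x'\<in>UNIV. P x x' * (\<Sum>y'\<in>UNIV. \<Sum>z'\<in>UNIV.
      step_weights Q g x x' c y' * step_weights Q g x x' c z' * pow_row_sum (Phi1 P Q g) k (x', y', z')))"
    unfolding step_weights_def sum_product
    by (simp add: sum_UNIV_prod Phi1_apply sum_distrib_left sum_distrib_right exp_add mult_ac)
  finally show ?thesis .
qed

lemma Phi0_weighted_row_sum_sq_le:
  fixes P Q :: "'e::finite \<Rightarrow> 'e \<Rightarrow> real"
  assumes P: "stochastic P"
  shows "(\<Sum>y\<in>UNIV. c y * pow_row_sum (Phi0 P Q g) k (x, y))\<^sup>2
    \<le> (\<Sum>y\<in>UNIV. \<Sum>z\<in>UNIV. c y * c z * pow_row_sum (Phi1 P Q g) k (x, y, z))"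
proof (induction k arbitrary: x c)
  case 0
  show ?case by (simp add: power2_eq_square sum_product)
next
  case (Suc k)
  define T where "T x' = (\<Sum>y'\<in>UNIV. step_weights Q g x x' c y' * pow_row_sum (Phi0 P Q g) k (x', y'))"
    for x'
  have "(\<Sum>y\<in>UNIV. c y * pow_row_sum (Phi0 P Q g) (Suc k) (x, y))\<^sup>2 = (\<Sum>x'\<in>UNIV. P x x' * T x')\<^sup>2"
    by (simp add: Phi0_weighted_row_sum_Suc T_def)
  also have "\<dots> \<le> (\<Sum>x'\<in>UNIV. P x x' * (T x')\<^sup>2)"
    using convex_on_sum[OF finite_class.finite_UNIV UNIV_not_empty convex_power2, of "P x" T] P
    unfolding stochastic_def by simp
  also have "\<dots> \<le> (\<Sum>x'\<in>UNIV. P x x' * (\<Sum>y'\<in>UNIV. \<Sum>z'\<in>UNIV.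
      step_weights Q g x x' c y' * step_weights Q g x x' c z' * pow_row_sum (Phi1 P Q g) k (x', y', z')))"
    using P unfolding T_def stochastic_def by (intro sum_mono mult_left_mono Suc.IH) auto
  also have "\<dots> = (\<Sum>y\<in>UNIV. \<Sum>z\<in>UNIV. c y * c z * pow_row_sum (Phi1 P Q g) (Suc k) (x, y, z))"
    by (rule Phi1_weighted_row_sum_Suc[symmetric])
  finally show ?case .
qed

lemma Phi0_row_sum_sq_le:
  fixes P Q :: "'e::finite \<Rightarrow> 'e \<Rightarrow> real"
  assumes "stochastic P"
  shows "(pow_row_sum (Phi0 P Q g) k (x, y))\<^sup>2 \<le> pow_row_sum (Phi1 P Q g) k (x, y, y)"
proof -
  let ?\<delta> = "\<lambda>y'. of_bool (y' = y) :: real"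
  have "(pow_row_sum (Phi0 P Q g) k (x, y))\<^sup>2 = (\<Sum>y'\<in>UNIV. ?\<delta> y' * pow_row_sum (Phi0 P Q g) k (x, y'))\<^sup>2"
    by simp
  also have "\<dots> \<le> (\<Sum>y'\<in>UNIV. \<Sum>z'\<in>UNIV. ?\<delta> y' * ?\<delta> z' * pow_row_sum (Phi1 P Q g) k (x, y', z'))"
    by (rule Phi0_weighted_row_sum_sq_le[OF assms])
  also have "\<dots> = pow_row_sum (Phi1 P Q g) k (x, y, y)"
    by (simp add: mult.assoc flip: sum_distrib_left)
  finally show ?thesis .
qed

theorem mainTheorem5:
  fixes P Q :: "'e::finite \<Rightarrow> 'e \<Rightarrow> real"
    and g :: "'e \<Rightarrow> 'e \<Rightarrow> 'e \<Rightarrow> 'e \<Rightarrow> real"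
  assumes "stochastic P" "irreducible_mat P" "aperiodic P"
    and "stochastic Q" "irreducible_mat Q" "aperiodic Q"
  shows "ln (varphi1 P Q g) \<ge> 2 * ln (varphi0 P Q g)"
proof -
  have pos: "0 < varphi0 P Q g"
    using varphi0_pos[OF \<open>stochastic P\<close> \<open>stochastic Q\<close>] .
  have "(varphi0 P Q g)\<^sup>2 \<le> varphi1 P Q g"
    unfolding varphi0_def varphi1_def
    using Phi0_nonneg[OF \<open>stochastic P\<close> \<open>stochastic Q\<close>]
      Phi0_row_sum_sq_le[OF \<open>stochastic P\<close>, of Q g]
    by (intro spectral_radius_power_le_of_row_sums[where f = "\<lambda>(x, y). (x, y, y)"]) auto
  then have "ln ((varphi0 P Q g)\<^sup>2) \<le> ln (varphi1 P Q g)"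
    using pos by (intro ln_mono) auto
  then show ?thesis
    using pos by (simp add: ln_realpow)
qed

end
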